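(* For $n\ge2$, the subgroup $\langle\rho_1,\dots,\rho_{n-1}\rangle$ of $TVB_n$ is isomorphic to $S_n$ (via $\rho_i\mapsto(i,i+1)$), and $TVB_n$ is the internal semidirect product $TVB_n=TVP_n\rtimes\langle\rho_1,\dots,\rho_{n-1}\rangle$, where the action on $TVP_n$ by conjugation is given by permutation of indices: for $a\in\langle\rho_1,\dots,\rho_{n-1}\rangle$ with image $\bar a\in S_n$, $a^{-1}\lambda_{ij}a=\lambda_{(i)\bar a,(j)\bar a}$ and $a^{-1}\gamma_i a=\gamma_{(i)\bar a}$.
   Context: For $n\ge 2$, the twisted virtual braid group $TVB_n$ is the group with generators $\sigma_1,\dots,\sigma_{n-1}$, $\rho_1,\dots,\rho_{n-1}$, $\gamma_1,\dots,\gamma_n$ and defining relations: $\sigma_i\sigma_{i+1}\sigma_i=\sigma_{i+1}\sigma_i\sigma_{i+1}$ ($1\le i\le n-2$); $\sigma_i\sigma_j=\sigma_j\sigma_i$ ($|i-j|\ge 2$); $\rho_i^2=1$; $\rho_i\rho_j=\rho_j\rho_i$ ($|i-j|\ge2$); $\rho_i\rho_{i+1}\rho_i=\rho_{i+1}\rho_i\rho_{i+1}$ ($1\le i\le n-2$); $\sigma_i\rho_j=\rho_j\sigma_i$ ($|i-j|\ge 2$); $\rho_i\rho_{i+1}\sigma_i=\sigma_{i+1}\rho_i\rho_{i+1}$ ($1\le i\le n-2$); $\gamma_i^2=1$ and $\gamma_i\gamma_j=\gamma_j\gamma_i$ (all $i,j$); $\gamma_j\rho_i=\rho_i\gamma_j$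 and $\gamma_j\sigma_i=\sigma_i\gamma_j$ for $j\notin\{i,i+1\}$; $\rho_i\gamma_i=\gamma_{i+1}\rho_i$ ($1\le i\le n-1$); $\rho_i\sigma_i\rho_i=\gamma_{i+1}\gamma_i\sigma_i\gamma_i\gamma_{i+1}$ ($1\le i\le n-1$). $\varphi_P:TVB_n\to S_n$ is the homomorphism with $\sigma_i\mapsto(i,i+1)$, $\rho_i\mapsto(i,i+1)$, $\gamma_j\mapsto e$, and $TVP_n=\ker\varphi_P$. In $TVB_n$ define $\lambda_{i,i+1}=\rho_i\sigma_i^{-1}$, $\lambda_{i+1,i}=\rho_i\lambda_{i,i+1}\rho_i$ ($1\le i\le n-1$), and for $1\le i<j-1\le n-1$: $\lambda_{ij}=\rho_{j-1}\cdots\rho_{i+1}\lambda_{i,i+1}\rho_{i+1}\cdots\rho_{j-1}$, $\lambda_{ji}=\rho_{j-1}\cdots\rho_{i+1}\lambda_{i+1,i}\rho_{i+1}\cdots\rho_{j-1}$. Permutations act on the right, $(k)\bar a$ being the image of $k$. *)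

theory Defs
  imports "HOL-Algebra.Algebra" "HOL-Combinatorics.Transposition" "HOL-Combinatorics.Permutations"
begin

datatype gen = Sg nat | Rg nat | Gg nat

text \<open>A letter is (flag, generator); flag True means the inverse of the generator.\<close>
type_synonym word = "(bool \<times> gen) list"

fun valid_gen :: "nat \<Rightarrow> gen \<Rightarrow> bool" where
  "valid_gen n (Sg i) = (1 \<le> i \<and> i \<le> n - 1)"
| "valid_gen n (Rg i) = (1 \<le> i \<and> i \<le> n - 1)"
| "valid_gen n (Gg j) = (1 \<le> j \<and> j \<le> n)"

definition words :: "nat \<Rightarrow> word set" where
  "words n = {w. \<forall>x\<in>set w. valid_gen n (snd x)}"

definition inv_word :: "word \<Rightarrow> word" where
  "inv_word w = rev (map (\<lambda>(b, x). (\<not> b, x)) w)"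

abbreviation sw :: "nat \<Rightarrow> word" where "sw i \<equiv> [(False, Sg i)]"
abbreviation rw :: "nat \<Rightarrow> word" where "rw i \<equiv> [(False, Rg i)]"
abbreviation gw :: "nat \<Rightarrow> word" where "gw i \<equiv> [(False, Gg i)]"

definition rels :: "nat \<Rightarrow> (word \<times> word) set" where
  "rels n =
     {(sw i @ sw (i+1) @ sw i, sw (i+1) @ sw i @ sw (i+1)) | i. 1 \<le> i \<and> i \<le> n - 2}
   \<union> {(sw i @ sw j, sw j @ sw i) | i j. 1 \<le> i \<and> i \<le> n - 1 \<and> 1 \<le> j \<and> j \<le> n - 1 \<and> (i + 2 \<le> j \<or> j + 2 \<le> i)}
   \<union> {(rw i @ rw i, []) | i. 1 \<le> i \<and> i \<le> n - 1}
   \<union> {(rw i @ rw j, rw j @ rw i) | i j. 1 \<le> i \<and> i \<le> n - 1 \<and> 1 \<le> j \<and> j \<le> n - 1 \<and> (i + 2 \<le> j \<or> j + 2 \<le> i)}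
   \<union> {(rw i @ rw (i+1) @ rw i, rw (i+1) @ rw i @ rw (i+1)) | i. 1 \<le> i \<and> i \<le> n - 2}
   \<union> {(sw i @ rw j, rw j @ sw i) | i j. 1 \<le> i \<and> i \<le> n - 1 \<and> 1 \<le> j \<and> j \<le> n - 1 \<and> (i + 2 \<le> j \<or> j + 2 \<le> i)}
   \<union> {(rw i @ rw (i+1) @ sw i, sw (i+1) @ rw i @ rw (i+1)) | i. 1 \<le> i \<and> i \<le> n - 2}
   \<union> {(gw i @ gw i, []) | i. 1 \<le> i \<and> i \<le> n}
   \<union> {(gw i @ gw j, gw j @ gw i) | i j. 1 \<le> i \<and> i \<le> n \<and> 1 \<le> j \<and> j \<le> n}
   \<union> {(gw j @ rw i, rw i @ gw j) | i j. 1 \<le> i \<and> i \<le> n - 1 \<and> 1 \<le> j \<and> j \<le> n \<and> j \<noteq> i \<and> j \<noteq> i + 1}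
   \<union> {(gw j @ sw i, sw i @ gw j) | i j. 1 \<le> i \<and> i \<le> n - 1 \<and> 1 \<le> j \<and> j \<le> n \<and> j \<noteq> i \<and> j \<noteq> i + 1}
   \<union> {(rw i @ gw i, gw (i+1) @ rw i) | i. 1 \<le> i \<and> i \<le> n - 1}
   \<union> {(rw i @ sw i @ rw i, gw (i+1) @ gw i @ sw i @ gw i @ gw (i+1)) | i. 1 \<le> i \<and> i \<le> n - 1}"

inductive eqv :: "nat \<Rightarrow> word \<Rightarrow> word \<Rightarrow> bool" for n where
  refl: "w \<in> words n \<Longrightarrow> eqv n w w"
| sym: "eqv n u v \<Longrightarrow> eqv n v u"
| trans: "eqv n u v \<Longrightarrow> eqv n v w \<Longrightarrow> eqv n u w"
| cancel: "u \<in> words n \<Longrightarrow> v \<in> words n \<Longrightarrow> valid_gen n x \<Longrightarrow>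
           eqv n (u @ [(b, x), (\<not> b, x)] @ v) (u @ v)"
| rel: "(l, r) \<in> rels n \<Longrightarrow> u \<in> words n \<Longrightarrow> v \<in> words n \<Longrightarrow>
        eqv n (u @ l @ v) (u @ r @ v)"

definition eqrel :: "nat \<Rightarrow> (word \<times> word) set" where
  "eqrel n = {(u, v). eqv n u v}"

definition cls :: "nat \<Rightarrow> word \<Rightarrow> word set" where
  "cls n w = eqrel n `` {w}"

definition tvb_mult :: "nat \<Rightarrow> word set \<Rightarrow> word set \<Rightarrow> word set" where
  "tvb_mult n A B = cls n ((SOME a. a \<in> A) @ (SOME b. b \<in> B))"

definition TVB :: "nat \<Rightarrow> word set monoid" where
  "TVB n = \<lparr> carrier = words n // eqrel n, monoid.mult = tvb_mult n, monoid.one = cls n [] \<rparr>"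

definition sigma :: "nat \<Rightarrow> nat \<Rightarrow> word set" where "sigma n i = cls n (sw i)"
definition rho :: "nat \<Rightarrow> nat \<Rightarrow> word set" where "rho n i = cls n (rw i)"
definition gamma :: "nat \<Rightarrow> nat \<Rightarrow> word set" where "gamma n j = cls n (gw j)"

definition lamw :: "nat \<Rightarrow> nat \<Rightarrow> word" where
  "lamw i j =
     (if j = i + 1 then rw i @ [(True, Sg i)]
      else if i = j + 1 then rw j @ (rw j @ [(True, Sg j)]) @ rw j
      else if i + 1 < j then
        map (\<lambda>k. (False, Rg k)) (rev [i+1..<j]) @ (rw i @ [(True, Sg i)])
          @ map (\<lambda>k. (False, Rg k)) [i+1..<j]
      else if j + 1 < i then
        map (\<lambda>k. (False, Rg k)) (rev [j+1..<i]) @ (rw j @ (rw j @ [(True, Sg j)]) @ rw j)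
          @ map (\<lambda>k. (False, Rg k)) [j+1..<i]
      else [])"

definition lambda :: "nat \<Rightarrow> nat \<Rightarrow> nat \<Rightarrow> word set" where
  "lambda n i j = cls n (lamw i j)"

text \<open>(k)(p q) = ((k)p)q, i.e. the product p q is the function q \<circ> p.\<close>
definition Sym :: "nat \<Rightarrow> (nat \<Rightarrow> nat) monoid" where
  "Sym n = \<lparr> carrier = {p. p permutes {1..n}}, monoid.mult = (\<lambda>p q. q \<circ> p), monoid.one = id \<rparr>"

fun gen_img :: "gen \<Rightarrow> nat \<Rightarrow> nat" where
  "gen_img (Sg i) = transpose i (i + 1)"
| "gen_img (Rg i) = transpose i (i + 1)"
| "gen_img (Gg j) = id"

text \<open>Image of x_1 x_2 ... x_m in Sym n is x_m \<circ> ... \<circ> x_1 (all images are involutions or id).\<close>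
definition phiw :: "word \<Rightarrow> nat \<Rightarrow> nat" where
  "phiw w = fold (\<lambda>x acc. gen_img (snd x) \<circ> acc) w id"

definition phiP :: "nat \<Rightarrow> word set \<Rightarrow> nat \<Rightarrow> nat" where
  "phiP n A = phiw (SOME w. w \<in> A)"

definition TVP :: "nat \<Rightarrow> word set set" where
  "TVP n = kernel (TVB n) (Sym n) (phiP n)"

definition RhoSub :: "nat \<Rightarrow> word set set" where
  "RhoSub n = generate (TVB n) {rho n i | i. 1 \<le> i \<and> i \<le> n - 1}"

end

theory Submission
  imports Defs
begin

text \<open>The map \<open>\<phi>\<^sub>P\<close> respects the defining relations, so it is a homomorphism onto \<open>S\<^sub>n\<close>
with kernel \<open>TVP\<^sub>n\<close>. Adjacent transpositions generate \<open>S\<^sub>n\<close>, so \<open>\<phi>\<^sub>P\<close> maps the subgroup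
\<open>R = \<langle>\<rho>\<^sub>1, \<dots>, \<rho>\<^sub>n\<^sub>-\<^sub>1\<rangle>\<close> onto \<open>S\<^sub>n\<close>. Conversely, the products \<open>r\<^sub>0 r\<^sub>1 \<cdots> r\<^sub>n\<^sub>-\<^sub>1\<close> of
descending runs \<open>r\<^sub>m = \<rho>\<^sub>m \<rho>\<^sub>m\<^sub>-\<^sub>1 \<cdots> \<rho>\<^sub>k\<close> (\<open>1 \<le> k \<le> m + 1\<close>, the empty run for \<open>k = m + 1\<close>)
form a set of at most \<open>n!\<close> elements that contains \<open>1\<close> and is closed under right multiplication
by every \<open>\<rho>\<^sub>i\<close>, by the braid and commutation relations. Hence \<open>|R| \<le> n!\<close>, \<open>\<phi>\<^sub>P\<close> is injective on
\<open>R\<close>, and \<open>R\<close> is a complement of the kernel.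

The conjugation formula for \<open>\<gamma>\<^sub>i\<close> is checked on the generators \<open>\<rho>\<^sub>k\<close>. For \<open>\<lambda>\<^sub>i\<^sub>j\<close> one shows that
\<open>\<lambda>\<^sub>i\<^sub>j = a\<inverse> \<lambda>\<^sub>1\<^sub>2 a\<close> for some \<open>a \<in> R\<close> with \<open>(1)a = i\<close> and \<open>(2)a = j\<close>, and that this conjugate
depends only on \<open>(1)a\<close> and \<open>(2)a\<close>: an element of \<open>R\<close> fixing \<open>1\<close> and \<open>2\<close> lies in
\<open>\<langle>\<rho>\<^sub>3, \<dots>, \<rho>\<^sub>n\<^sub>-\<^sub>1\<rangle>\<close> by injectivity, and therefore commutes with \<open>\<lambda>\<^sub>1\<^sub>2 = \<rho>\<^sub>1 \<sigma>\<^sub>1\<inverse>\<close>.\<close>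

section \<open>The group structure on words\<close>

lemma words_append [simp]: "u @ v \<in> words n \<longleftrightarrow> u \<in> words n \<and> v \<in> words n"
  by (auto simp: words_def)

lemma words_Cons [simp]: "x # v \<in> words n \<longleftrightarrow> valid_gen n (snd x) \<and> v \<in> words n"
  by (auto simp: words_def)

lemma words_Nil [simp]: "[] \<in> words n"
  by (auto simp: words_def)

lemma rels_words: "(l, r) \<in> rels n \<Longrightarrow> l \<in> words n \<and> r \<in> words n"
  unfolding rels_def by auto

lemma eqv_words: "eqv n u v \<Longrightarrow> u \<in> words n \<and> v \<in> words n"
  by (induction rule: eqv.induct) (auto dest: rels_words)

lemma eqv_append_context:
  "eqv n u v \<Longrightarrow> x \<in> words n \<Longrightarrow> y \<in> words n \<Longrightarrow> eqv n (x @ u @ y) (x @ v @ y)"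
proof (induction rule: eqv.induct)
  case (refl w) then show ?case by (intro eqv.refl) simp
next
  case (sym u v) then show ?case by (blast intro: eqv.sym)
next
  case (trans u v w) then show ?case by (blast intro: eqv.trans)
next
  case (cancel u v x' b)
  then show ?case using eqv.cancel[of "x @ u" n "v @ y" x' b] by simp
next
  case (rel l r u v)
  then show ?case using eqv.rel[of l r n "x @ u" "v @ y"] by simp
qed

lemma eqv_append: "eqv n u u' \<Longrightarrow> eqv n v v' \<Longrightarrow> eqv n (u @ v) (u' @ v')"
proof -
  assume u: "eqv n u u'" and v: "eqv n v v'"
  have "eqv n (u @ v) (u' @ v)" using eqv_append_context[OF u, of "[]" v] eqv_words[OF v] by simp
  moreover have "eqv n (u' @ v) (u' @ v')" using eqv_append_context[OF v, of u' "[]"] eqv_words[OF u] by simp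
  ultimately show ?thesis by (rule eqv.trans)
qed

lemma mem_cls_iff: "w \<in> cls n u \<longleftrightarrow> eqv n u w"
  by (simp add: cls_def eqrel_def)

lemma cls_eqI: "eqv n u v \<Longrightarrow> cls n u = cls n v"
  unfolding cls_def eqrel_def by (auto intro: eqv.trans eqv.sym)

lemma carrier_TVB: "carrier (TVB n) = cls n ` words n"
  by (auto simp: TVB_def quotient_def cls_def)

lemma eqv_some_cls: "u \<in> words n \<Longrightarrow> eqv n u (SOME a. a \<in> cls n u)"
  using someI[of "\<lambda>a. a \<in> cls n u" u] by (simp add: mem_cls_iff eqv.refl)

lemma mult_TVB_cls:
  "u \<in> words n \<Longrightarrow> v \<in> words n \<Longrightarrow> cls n u \<otimes>\<^bsub>TVB n\<^esub> cls n v = cls n (u @ v)"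
  unfolding TVB_def tvb_mult_def
  by (simp, rule cls_eqI, rule eqv.sym, rule eqv_append; rule eqv_some_cls)

lemma one_TVB: "\<one>\<^bsub>TVB n\<^esub> = cls n []"
  by (simp add: TVB_def)

lemma inv_word_Cons: "inv_word (x # w) = inv_word w @ [(\<not> fst x, snd x)]"
  by (cases x) (simp add: inv_word_def)

lemma inv_word_Nil [simp]: "inv_word [] = []"
  by (simp add: inv_word_def)

lemma inv_word_words: "w \<in> words n \<Longrightarrow> inv_word w \<in> words n"
  by (induction w) (auto simp: inv_word_Cons)

lemma eqv_inv_word_append: "w \<in> words n \<Longrightarrow> eqv n (inv_word w @ w) []"
proof (induction w)
  case Nil then show ?case by (simp add: eqv.refl)
next
  case (Cons x w)
  obtain b g where x: "x = (b, g)" by (cases x)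
  have "eqv n (inv_word w @ [(\<not> b, g), (\<not> \<not> b, g)] @ w) (inv_word w @ w)"
    using Cons x by (intro eqv.cancel) (auto intro: inv_word_words)
  then have "eqv n (inv_word (x # w) @ x # w) (inv_word w @ w)"
    by (simp add: x inv_word_Cons)
  then show ?case using Cons by (auto intro: eqv.trans)
qed

lemma group_TVB: "group (TVB n)"
proof (rule groupI)
  fix x assume "x \<in> carrier (TVB n)"
  then obtain w where w: "w \<in> words n" "x = cls n w" by (auto simp: carrier_TVB)
  then have "cls n (inv_word w) \<otimes>\<^bsub>TVB n\<^esub> x = \<one>\<^bsub>TVB n\<^esub>"
    by (simp add: mult_TVB_cls inv_word_words one_TVB cls_eqI eqv_inv_word_append)
  moreover have "cls n (inv_word w) \<in> carrier (TVB n)"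
    using w by (simp add: carrier_TVB inv_word_words)
  ultimately show "\<exists>y\<in>carrier (TVB n). y \<otimes>\<^bsub>TVB n\<^esub> x = \<one>\<^bsub>TVB n\<^esub>" by blast
qed (auto simp: carrier_TVB mult_TVB_cls one_TVB)

lemma inv_TVB_cls: "w \<in> words n \<Longrightarrow> inv\<^bsub>TVB n\<^esub> (cls n w) = cls n (inv_word w)"
  by (rule group.inv_equality[OF group_TVB])
    (simp_all add: mult_TVB_cls inv_word_words one_TVB cls_eqI eqv_inv_word_append carrier_TVB)

section \<open>The homomorphism onto the symmetric group\<close>

lemma phiw_append: "phiw (u @ v) = phiw v \<circ> phiw u"
proof -
  have "fold (\<lambda>x acc. gen_img (snd x) \<circ> acc) v s = phiw v \<circ> s" for s :: "nat \<Rightarrow> nat"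
    unfolding phiw_def
  proof (induction v arbitrary: s)
    case (Cons x v)
    show ?case
      using Cons[of "gen_img (snd x) \<circ> s"] Cons[of "gen_img (snd x)"] by (simp add: comp_assoc)
  qed simp
  from this[of "phiw u"] show ?thesis by (simp add: phiw_def)
qed

lemma phiw_Cons: "phiw (x # v) = phiw v \<circ> gen_img (snd x)"
  using phiw_append[of "[x]" v] by (simp add: phiw_def)

lemma gen_img_involution [simp]: "gen_img g \<circ> gen_img g = id"
  by (cases g) auto

lemma transpose_adjacent_braid:
  "transpose i (Suc i) \<circ> (transpose (Suc i) (Suc (Suc i)) \<circ> transpose i (Suc i))
   = transpose (Suc i) (Suc (Suc i)) \<circ> (transpose i (Suc i) \<circ> transpose (Suc i) (Suc (Suc i)))"
  by (auto simp: fun_eq_iff transpose_def)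

lemma transpose_adjacent_commute:
  "i + 2 \<le> j \<or> j + 2 \<le> i \<Longrightarrow>
   transpose i (Suc i) \<circ> transpose j (Suc j) = transpose j (Suc j) \<circ> transpose i (Suc i)"
  by (auto simp: fun_eq_iff transpose_def)

lemma phiw_rels: "(l, r) \<in> rels n \<Longrightarrow> phiw l = phiw r"
  unfolding rels_def
  by (auto simp: phiw_Cons transpose_adjacent_braid transpose_adjacent_commute
      comp_assoc[symmetric] fun_eq_iff transpose_def)

lemma phiw_eqv: "eqv n u v \<Longrightarrow> phiw u = phiw v"
proof (induction rule: eqv.induct)
  case (cancel u v x b)
  then show ?case by (simp add: phiw_append phiw_Cons comp_assoc)
next
  case (rel l r u v)
  then show ?case by (simp add: phiw_append phiw_rels)
qed auto

lemma phiP_cls: "w \<in> words n \<Longrightarrow> phiP n (cls n w) = phiw w"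
  unfolding phiP_def using eqv_some_cls[of w n] phiw_eqv by metis

lemma phiw_permutes: "w \<in> words n \<Longrightarrow> phiw w permutes {1..n}"
proof (induction w)
  case (Cons x w)
  have "gen_img (snd x) permutes {1..n}"
    using Cons.prems by (cases "snd x") (auto intro: permutes_swap_id simp: permutes_id)
  then show ?case using Cons unfolding phiw_Cons by (intro permutes_compose) auto
qed (simp add: phiw_def permutes_id)

lemma carrier_Sym: "carrier (Sym n) = {p. p permutes {1..n}}"
  by (simp add: Sym_def)

lemma mult_Sym [simp]: "p \<otimes>\<^bsub>Sym n\<^esub> q = q \<circ> p"
  by (simp add: Sym_def)

lemma one_Sym [simp]: "\<one>\<^bsub>Sym n\<^esub> = id"
  by (simp add: Sym_def)

lemma group_Sym: "group (Sym n)"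
proof (rule groupI)
  fix p assume "p \<in> carrier (Sym n)"
  then have "inv_into UNIV p \<in> carrier (Sym n)" "inv_into UNIV p \<otimes>\<^bsub>Sym n\<^esub> p = \<one>\<^bsub>Sym n\<^esub>"
    by (auto simp: carrier_Sym permutes_inv permutes_inv_o)
  then show "\<exists>q\<in>carrier (Sym n). q \<otimes>\<^bsub>Sym n\<^esub> p = \<one>\<^bsub>Sym n\<^esub>" by blast
qed (auto simp: carrier_Sym permutes_compose permutes_id comp_assoc)

lemma phiP_hom: "phiP n \<in> hom (TVB n) (Sym n)"
  unfolding hom_def by (auto simp: carrier_TVB mult_TVB_cls phiP_cls phiw_append carrier_Sym phiw_permutes[simplified])

lemma group_hom_phiP: "group_hom (TVB n) (Sym n) (phiP n)"
  by (simp add: group_hom_def group_hom_axioms_def group_TVB group_Sym phiP_hom)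

lemma (in group) generate_subset_of_right_closed:
  assumes A: "A \<subseteq> carrier G" "\<And>a. a \<in> A \<Longrightarrow> inv a \<in> A"
    and S: "S \<subseteq> carrier G" "\<one> \<in> S" "\<And>x a. x \<in> S \<Longrightarrow> a \<in> A \<Longrightarrow> x \<otimes> a \<in> S"
  shows "generate G A \<subseteq> S"
proof
  fix g assume g: "g \<in> generate G A"
  then have "\<forall>x\<in>S. x \<otimes> g \<in> S"
  proof (induction rule: generate.induct)
    case (eng g h)
    then have "g \<in> carrier G" "h \<in> carrier G" using generate_in_carrier[OF A(1)] by auto
    then show ?case using eng.IH S(1) by (auto simp: m_assoc[symmetric])
  qed (use A S in auto)
  then show "g \<in> S" using S(2) generate_in_carrier[OF A(1) g] by force
qed

lemma (in group) generate_commute: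
  assumes A: "A \<subseteq> carrier G" and z: "z \<in> carrier G" and comm: "\<And>a. a \<in> A \<Longrightarrow> a \<otimes> z = z \<otimes> a"
    and x: "x \<in> generate G A"
  shows "x \<otimes> z = z \<otimes> x"
  using x
proof (induction rule: generate.induct)
  case (inv a)
  then have a: "a \<in> carrier G" using A by auto
  have "inv a \<otimes> z = inv a \<otimes> (z \<otimes> a) \<otimes> inv a" using a z by (simp add: m_assoc)
  also have "\<dots> = inv a \<otimes> (a \<otimes> z) \<otimes> inv a" using comm[OF inv] by simp
  also have "\<dots> = z \<otimes> inv a" using a z by (simp add: m_assoc[symmetric])
  finally show ?case .
next
  case (eng g h)
  then have g: "g \<in> carrier G" and h: "h \<in> carrier G" using generate_in_carrier[OF A] by auto
  have "g \<otimes> h \<otimes> z = g \<otimes> (z \<otimes> h)" using g h z eng.IH(2) by (simp add: m_assoc)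
  also have "\<dots> = z \<otimes> (g \<otimes> h)" using g h z eng.IH(1) by (simp add: m_assoc[symmetric])
  finally show ?case .
qed (use comm z in auto)

lemma (in group) inv_mult_conj:
  "a \<in> carrier G \<Longrightarrow> b \<in> carrier G \<Longrightarrow> x \<in> carrier G \<Longrightarrow>
   inv (a \<otimes> b) \<otimes> x \<otimes> (a \<otimes> b) = inv b \<otimes> (inv a \<otimes> x \<otimes> a) \<otimes> b"
  by (simp add: inv_mult_group m_assoc)

lemma (in group_hom) kernel_Int_subgroup:
  assumes K: "subgroup K G" and inj: "inj_on h K"
  shows "kernel G H h \<inter> K = {\<one>}"
proof -
  have "x = \<one>" if "x \<in> K" "h x = \<one>\<^bsub>H\<^esub>" for x
    using inj_onD[OF inj _ that(1) subgroup.one_closed[OF K]] that(2) by simp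
  moreover have "\<one> \<in> kernel G H h \<inter> K"
    using subgroup.one_closed[OF K] by (simp add: kernel_def)
  ultimately show ?thesis unfolding kernel_def by blast
qed

lemma (in group_hom) kernel_set_mult_subgroup:
  assumes K: "subgroup K G" and onto: "h ` K = carrier H"
  shows "kernel G H h <#> K = carrier G"
proof
  show "kernel G H h <#> K \<subseteq> carrier G"
    using subgroup.subset[OF K] by (auto simp: set_mult_def kernel_def)
next
  show "carrier G \<subseteq> kernel G H h <#> K"
  proof
    fix g assume g: "g \<in> carrier G"
    then have "h g \<in> h ` K" using onto by simp
    then obtain a where a: "a \<in> K" "h g = h a" by blast
    then have a_carrier: "a \<in> carrier G" using subgroup.subset[OF K] by auto
    have "g \<otimes> inv a \<in> kernel G H h"
      using g a a_carrier by (simp add: kernel_def)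
    then have "(g \<otimes> inv a) \<otimes> a \<in> kernel G H h <#> K"
      using a(1) unfolding set_mult_def by blast
    moreover have "(g \<otimes> inv a) \<otimes> a = g" using g a_carrier by (simp add: G.m_assoc)
    ultimately show "g \<in> kernel G H h <#> K" by simp
  qed
qed

lemma permutes_in_adjacent_transposition_closed:
  fixes T :: "(nat \<Rightarrow> nat) set"
  assumes id: "id \<in> T"
    and comp: "\<And>f g. f \<in> T \<Longrightarrow> g \<in> T \<Longrightarrow> g \<circ> f \<in> T"
    and adjacent: "\<And>k. a \<le> k \<Longrightarrow> Suc k \<le> b \<Longrightarrow> transpose k (Suc k) \<in> T"
    and p: "p permutes {a..b}"
  shows "p \<in> T"
proof -
  have transpose: "transpose x y \<in> T" if "a \<le> x" "x < y" "y \<le> b" for x y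
    using that
  proof (induction y)
    case (Suc y)
    show ?case
    proof (cases "x = y")
      case False
      have xy: "transpose x y \<in> T" and y: "transpose y (Suc y) \<in> T"
        using Suc False adjacent by auto
      have "transpose x (Suc y) = transpose y (Suc y) \<circ> transpose x y \<circ> transpose y (Suc y)"
        using Suc.prems False by (auto simp: fun_eq_iff transpose_def)
      then show ?thesis using comp[OF y comp[OF xy y]] by (simp only:)
    qed (use Suc.prems adjacent in simp)
  qed simp
  from p finite_atLeastAtMost show ?thesis
  proof (induction rule: permutes_induct)
    case (swap x y p)
    then have "transpose x y \<in> T"
      using transpose[of x y] transpose[of y x] by (cases "x < y") (auto simp: transpose_commute)
    then show ?case using comp swap by blast
  qed (rule id)
qed

section \<open>The subgroup generated by the \<open>\<rho>\<^sub>i\<close>\<close>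

locale tvb =
  fixes n :: nat
  assumes two_le_n: "2 \<le> n"

sublocale tvb \<subseteq> G: group "TVB n"
  by (rule group_TVB)

sublocale tvb \<subseteq> H: group_hom "TVB n" "Sym n" "phiP n"
  by (rule group_hom_phiP)

context tvb
begin

abbreviation tmult (infixl "\<diamond>" 70) where "x \<diamond> y \<equiv> x \<otimes>\<^bsub>TVB n\<^esub> y"
abbreviation tinv where "tinv x \<equiv> inv\<^bsub>TVB n\<^esub> x"
abbreviation tone where "tone \<equiv> \<one>\<^bsub>TVB n\<^esub>"

lemma cls_rel: "(l, r) \<in> rels n \<Longrightarrow> cls n l = cls n r"
  by (rule cls_eqI) (use eqv.rel[of l r n "[]" "[]"] in simp)

lemma rho_carrier [simp]: "1 \<le> i \<Longrightarrow> i \<le> n - 1 \<Longrightarrow> rho n i \<in> carrier (TVB n)"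
  by (simp add: rho_def carrier_TVB)

lemma sigma_carrier [simp]: "1 \<le> i \<Longrightarrow> i \<le> n - 1 \<Longrightarrow> sigma n i \<in> carrier (TVB n)"
  by (simp add: sigma_def carrier_TVB)

lemma gamma_carrier [simp]: "1 \<le> i \<Longrightarrow> i \<le> n \<Longrightarrow> gamma n i \<in> carrier (TVB n)"
  by (simp add: gamma_def carrier_TVB)

lemma rho_rho:
  assumes "1 \<le> i" "i \<le> n - 1"
  shows "rho n i \<diamond> rho n i = tone"
proof -
  have "(rw i @ rw i, []) \<in> rels n" using assms unfolding rels_def by blast
  then show ?thesis using assms by (simp add: rho_def mult_TVB_cls one_TVB cls_rel)
qed

lemma rho_rho_cancel:
  "1 \<le> i \<Longrightarrow> i \<le> n - 1 \<Longrightarrow> x \<in> carrier (TVB n) \<Longrightarrow> rho n i \<diamond> (rho n i \<diamond> x) = x"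
  by (simp add: G.m_assoc[symmetric] rho_rho)

lemma inv_rho: "1 \<le> i \<Longrightarrow> i \<le> n - 1 \<Longrightarrow> tinv (rho n i) = rho n i"
  by (rule G.inv_equality) (simp_all add: rho_rho)

lemma rho_braid:
  assumes "1 \<le> i" "i \<le> n - 2"
  shows "rho n i \<diamond> rho n (i+1) \<diamond> rho n i = rho n (i+1) \<diamond> rho n i \<diamond> rho n (i+1)"
proof -
  have "(rw i @ rw (i+1) @ rw i, rw (i+1) @ rw i @ rw (i+1)) \<in> rels n"
    using assms unfolding rels_def by blast
  moreover have "i + 1 \<le> n - 1" using assms by arith
  ultimately show ?thesis using assms by (simp add: rho_def mult_TVB_cls cls_rel)
qed

lemma rho_commute:
  assumes "1 \<le> i" "i \<le> n - 1" "1 \<le> j" "j \<le> n - 1" "i + 2 \<le> j \<or> j + 2 \<le> i"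
  shows "rho n i \<diamond> rho n j = rho n j \<diamond> rho n i"
proof -
  have "(rw i @ rw j, rw j @ rw i) \<in> rels n" using assms unfolding rels_def by blast
  then show ?thesis using assms by (simp add: rho_def mult_TVB_cls cls_rel)
qed

lemma rho_rho_sigma:
  assumes "1 \<le> i" "i \<le> n - 2"
  shows "rho n i \<diamond> rho n (i+1) \<diamond> sigma n i = sigma n (i+1) \<diamond> rho n i \<diamond> rho n (i+1)"
proof -
  have "(rw i @ rw (i+1) @ sw i, sw (i+1) @ rw i @ rw (i+1)) \<in> rels n"
    using assms unfolding rels_def by blast
  moreover have "i + 1 \<le> n - 1" using assms by arith
  ultimately show ?thesis using assms by (simp add: rho_def sigma_def mult_TVB_cls cls_rel)
qed

lemma sigma_rho_commute:
  assumes "1 \<le> i" "i \<le> n - 1" "1 \<le> j" "j \<le> n - 1" "i + 2 \<le> j \<or> j + 2 \<le> i"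
  shows "sigma n i \<diamond> rho n j = rho n j \<diamond> sigma n i"
proof -
  have "(sw i @ rw j, rw j @ sw i) \<in> rels n" using assms unfolding rels_def by blast
  then show ?thesis using assms by (simp add: rho_def sigma_def mult_TVB_cls cls_rel)
qed

lemma rho_gamma:
  assumes "1 \<le> i" "i \<le> n - 1"
  shows "rho n i \<diamond> gamma n i = gamma n (i+1) \<diamond> rho n i"
proof -
  have "(rw i @ gw i, gw (i+1) @ rw i) \<in> rels n" using assms unfolding rels_def by blast
  then show ?thesis using assms by (simp add: rho_def gamma_def mult_TVB_cls cls_rel)
qed

lemma gamma_rho_commute:
  assumes "1 \<le> i" "i \<le> n - 1" "1 \<le> j" "j \<le> n" "j \<noteq> i" "j \<noteq> i + 1"
  shows "gamma n j \<diamond> rho n i = rho n i \<diamond> gamma n j"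
proof -
  have "(gw j @ rw i, rw i @ gw j) \<in> rels n" using assms unfolding rels_def by blast
  then show ?thesis using assms by (simp add: rho_def gamma_def mult_TVB_cls cls_rel)
qed

lemma phiP_rho: "1 \<le> i \<Longrightarrow> i \<le> n - 1 \<Longrightarrow> phiP n (rho n i) = transpose i (i + 1)"
  by (simp add: rho_def phiP_cls phiw_def)

lemma phiP_permutes: "x \<in> carrier (TVB n) \<Longrightarrow> phiP n x permutes {1..n}"
  using H.hom_closed[of x] by (simp add: carrier_Sym)

lemma phiP_inv_apply: "x \<in> carrier (TVB n) \<Longrightarrow> phiP n (tinv x) (phiP n x i) = i"
  using H.hom_mult[of x "tinv x"] by (simp add: fun_eq_iff)

definition RhoGen :: "nat \<Rightarrow> nat \<Rightarrow> word set set" where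
  "RhoGen a b = generate (TVB n) {rho n i | i. a \<le> i \<and> i < b}"

lemma rho_gens_carrier: "1 \<le> a \<Longrightarrow> b \<le> n \<Longrightarrow> {rho n i | i. a \<le> i \<and> i < b} \<subseteq> carrier (TVB n)"
  by auto

lemma subgroup_RhoGen: "1 \<le> a \<Longrightarrow> b \<le> n \<Longrightarrow> subgroup (RhoGen a b) (TVB n)"
  unfolding RhoGen_def by (rule G.generate_is_subgroup[OF rho_gens_carrier])

lemma rho_in_RhoGen: "a \<le> i \<Longrightarrow> i < b \<Longrightarrow> rho n i \<in> RhoGen a b"
  unfolding RhoGen_def by (rule generate.incl) blast

lemma RhoSub_eq_RhoGen: "RhoSub n = RhoGen 1 n"
proof -
  have "{rho n i | i. 1 \<le> i \<and> i \<le> n - 1} = {rho n i | i. 1 \<le> i \<and> i < n}" by force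
  then show ?thesis by (simp add: RhoSub_def RhoGen_def)
qed

lemma subgroup_RhoSub: "subgroup (RhoSub n) (TVB n)"
  using subgroup_RhoGen[of 1 n] two_le_n by (simp add: RhoSub_eq_RhoGen)

lemma RhoSub_carrier: "x \<in> RhoSub n \<Longrightarrow> x \<in> carrier (TVB n)"
  using subgroup.subset[OF subgroup_RhoSub] by blast

lemma rho_in_RhoSub: "1 \<le> i \<Longrightarrow> i \<le> n - 1 \<Longrightarrow> rho n i \<in> RhoSub n"
  using rho_in_RhoGen[of 1 i n] by (simp add: RhoSub_eq_RhoGen)

lemma phiP_RhoGen_onto:
  assumes "1 \<le> a" "b \<le> n" "p permutes {a..b}"
  shows "\<exists>x\<in>RhoGen a b. phiP n x = p"
proof -
  have "p \<in> phiP n ` RhoGen a b"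
  proof (rule permutes_in_adjacent_transposition_closed[OF _ _ _ assms(3)])
    show "id \<in> phiP n ` RhoGen a b"
      using subgroup.one_closed[OF subgroup_RhoGen[OF assms(1,2)]] by force
  next
    fix f g assume "f \<in> phiP n ` RhoGen a b" "g \<in> phiP n ` RhoGen a b"
    then obtain x y where "x \<in> RhoGen a b" "y \<in> RhoGen a b" "f = phiP n x" "g = phiP n y"
      by blast
    moreover from this have "x \<diamond> y \<in> RhoGen a b"
      using subgroup.m_closed[OF subgroup_RhoGen[OF assms(1,2)]] by blast
    moreover from calculation have "phiP n (x \<diamond> y) = g \<circ> f"
      using subgroup.subset[OF subgroup_RhoGen[OF assms(1,2)]] by (simp add: subsetD)
    ultimately show "g \<circ> f \<in> phiP n ` RhoGen a b" by force
  next
    fix k assume "a \<le> k" "Suc k \<le> b"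
    then show "transpose k (Suc k) \<in> phiP n ` RhoGen a b"
      using assms rho_in_RhoGen[of a k b] phiP_rho[of k] by force
  qed
  then show ?thesis by blast
qed

lemma phiP_image_RhoSub: "phiP n ` RhoSub n = carrier (Sym n)"
proof
  show "phiP n ` RhoSub n \<subseteq> carrier (Sym n)" using RhoSub_carrier by auto
  show "carrier (Sym n) \<subseteq> phiP n ` RhoSub n"
    using phiP_RhoGen_onto[of 1 n] two_le_n by (force simp: carrier_Sym RhoSub_eq_RhoGen)
qed

fun rho_run :: "nat \<Rightarrow> nat \<Rightarrow> word set" where
  "rho_run k 0 = tone"
| "rho_run k (Suc m) = (if k \<le> Suc m then rho n (Suc m) \<diamond> rho_run k m else tone)"

lemma rho_run_carrier: "1 \<le> k \<Longrightarrow> m \<le> n - 1 \<Longrightarrow> rho_run k m \<in> carrier (TVB n)"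
  by (induction m) auto

lemma rho_run_empty: "m < k \<Longrightarrow> rho_run k m = tone"
  by (induction m) auto

lemma rho_run_self: "1 \<le> m \<Longrightarrow> m \<le> n - 1 \<Longrightarrow> rho_run m m = rho n m"
  by (cases m) (auto simp: rho_run_empty)

lemma rho_run_split_last:
  "1 \<le> k \<Longrightarrow> k \<le> m \<Longrightarrow> m \<le> n - 1 \<Longrightarrow> rho_run k m = rho_run (k+1) m \<diamond> rho n k"
proof (induction m)
  case (Suc m)
  show ?case
  proof (cases "k = Suc m")
    case True
    then show ?thesis using Suc.prems by (simp add: rho_run_empty)
  next
    case False
    then show ?thesis using Suc by (simp add: G.m_assoc rho_run_carrier)
  qed
qed simp

lemma rho_run_commute:
  assumes "1 \<le> k" "m \<le> n - 1" "1 \<le> i" "i \<le> n - 1"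
    and "\<And>j. k \<le> j \<Longrightarrow> j \<le> m \<Longrightarrow> i + 2 \<le> j \<or> j + 2 \<le> i"
  shows "rho_run k m \<diamond> rho n i = rho n i \<diamond> rho_run k m"
  using assms
proof (induction m)
  case (Suc m)
  show ?case
  proof (cases "k \<le> Suc m")
    case True
    have "rho n (Suc m) \<diamond> rho n i = rho n i \<diamond> rho n (Suc m)"
      using Suc.prems True by (intro rho_commute) auto
    moreover have "rho_run k m \<diamond> rho n i = rho n i \<diamond> rho_run k m" using Suc by auto
    ultimately show ?thesis using True Suc.prems rho_run_carrier
      by (simp add: G.m_assoc) (simp add: G.m_assoc[symmetric])
  qed (use Suc.prems in simp)
qed simp

lemma rho_run_shift_top:
  assumes "1 \<le> k" "k \<le> m" "Suc m \<le> n - 1"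
  shows "rho_run k (Suc m) \<diamond> rho n (Suc m) = rho n m \<diamond> rho_run k (Suc m)"
proof -
  obtain m' where m': "m = Suc m'" using assms by (cases m) auto
  have run: "rho_run k (Suc m) = rho n (Suc m) \<diamond> (rho n m \<diamond> rho_run k m')"
    using m' assms by simp
  have comm: "rho_run k m' \<diamond> rho n (Suc m) = rho n (Suc m) \<diamond> rho_run k m'"
    using assms m' by (intro rho_run_commute) auto
  have braid: "rho n (Suc m) \<diamond> rho n m \<diamond> rho n (Suc m) = rho n m \<diamond> rho n (Suc m) \<diamond> rho n m"
    using rho_braid[of m] assms m' by simp
  have carrier: "rho_run k m' \<in> carrier (TVB n)" "rho n m \<in> carrier (TVB n)"
    "rho n (Suc m) \<in> carrier (TVB n)"
    using assms m' by (auto intro: rho_run_carrier)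
  have "rho_run k (Suc m) \<diamond> rho n (Suc m)
      = rho n (Suc m) \<diamond> rho n m \<diamond> (rho_run k m' \<diamond> rho n (Suc m))"
    using run carrier by (simp add: G.m_assoc)
  also have "\<dots> = (rho n (Suc m) \<diamond> rho n m \<diamond> rho n (Suc m)) \<diamond> rho_run k m'"
    using comm carrier by (simp add: G.m_assoc)
  also have "\<dots> = rho n m \<diamond> rho_run k (Suc m)"
    unfolding braid using run carrier by (simp add: G.m_assoc)
  finally show ?thesis .
qed

lemma rho_run_shift:
  "1 \<le> k \<Longrightarrow> k < i \<Longrightarrow> i \<le> m \<Longrightarrow> m \<le> n - 1 \<Longrightarrow>
   rho_run k m \<diamond> rho n i = rho n (i - 1) \<diamond> rho_run k m"
proof (induction m)
  case (Suc m)
  show ?case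
  proof (cases "i = Suc m")
    case True
    then show ?thesis using rho_run_shift_top[of k m] Suc.prems by simp
  next
    case False
    then have "i \<le> m" using Suc.prems by simp
    then have ih: "rho_run k m \<diamond> rho n i = rho n (i - 1) \<diamond> rho_run k m" using Suc by auto
    have comm: "rho n (Suc m) \<diamond> rho n (i - 1) = rho n (i - 1) \<diamond> rho n (Suc m)"
      using Suc.prems \<open>i \<le> m\<close> by (intro rho_commute) auto
    have carrier: "rho_run k m \<in> carrier (TVB n)" "rho n (Suc m) \<in> carrier (TVB n)"
      "rho n i \<in> carrier (TVB n)" "rho n (i - 1) \<in> carrier (TVB n)"
      using Suc.prems \<open>i \<le> m\<close> by (auto intro: rho_run_carrier)
    have "rho_run k (Suc m) \<diamond> rho n i = rho n (Suc m) \<diamond> (rho_run k m \<diamond> rho n i)"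
      using Suc.prems carrier by (simp add: G.m_assoc)
    also have "\<dots> = (rho n (Suc m) \<diamond> rho n (i - 1)) \<diamond> rho_run k m"
      using ih carrier by (simp add: G.m_assoc)
    also have "\<dots> = rho n (i - 1) \<diamond> rho_run k (Suc m)"
      using comm carrier Suc.prems by (simp add: G.m_assoc)
    finally show ?thesis .
  qed
qed simp

lemma rho_run_mult_rho:
  assumes k: "1 \<le> k" "k \<le> Suc m" and i: "1 \<le> i" "i \<le> m" and m: "m \<le> n - 1"
  obtains k' where "1 \<le> k'" "k' \<le> Suc m" "rho_run k m \<diamond> rho n i = rho_run k' m"
    | j where "1 \<le> j" "j < m" "rho_run k m \<diamond> rho n i = rho n j \<diamond> rho_run k m"
proof -
  have r: "rho n i \<in> carrier (TVB n)" using i m by simp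
  consider "k = Suc m" | "i = k" | "i + 1 = k" | "i + 2 \<le> k" "k \<le> m" | "k < i"
    using k i by linarith
  then show ?thesis
  proof cases
    case 1
    then have run: "rho_run k m \<diamond> rho n i = rho n i" using r by (simp add: rho_run_empty)
    show ?thesis
    proof (cases "i = m")
      case True then show ?thesis using that(1)[of m] run i m by (simp add: rho_run_self)
    next
      case False then show ?thesis using that(2)[of i] run i m 1 r by (simp add: rho_run_empty)
    qed
  next
    case 2
    then have "rho_run k m \<diamond> rho n i = rho_run (k+1) m"
      using k i m rho_run_split_last[of k m] rho_run_carrier[of "k+1" m]
      by (simp add: G.m_assoc rho_rho)
    then show ?thesis using that(1)[of "k+1"] 2 i by simp
  next
    case 3
    then have "rho_run k m \<diamond> rho n i = rho_run i m"
      using k i m rho_run_split_last[of i m] by simp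
    then show ?thesis using that(1)[of i] 3 i by simp
  next
    case 4
    then show ?thesis using that(2)[of i] rho_run_commute[of k m i] k i m by fastforce
  next
    case 5
    then show ?thesis using that(2)[of "i - 1"] rho_run_shift[of k i m] k i m by fastforce
  qed
qed

fun rho_normal_forms :: "nat \<Rightarrow> word set set" where
  "rho_normal_forms 0 = {tone}"
| "rho_normal_forms (Suc m) = (\<lambda>(u, k). u \<diamond> rho_run k m) ` (rho_normal_forms m \<times> {1..Suc m})"

lemma rho_normal_forms_carrier: "m \<le> n \<Longrightarrow> rho_normal_forms m \<subseteq> carrier (TVB n)"
  by (induction m) (auto intro!: rho_run_carrier)

lemma one_in_rho_normal_forms: "m \<le> n \<Longrightarrow> tone \<in> rho_normal_forms m"
proof (induction m)
  case (Suc m)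
  have "tone \<diamond> rho_run (Suc m) m \<in> rho_normal_forms (Suc m)"
    using Suc by (auto intro: rev_image_eqI[of "(tone, Suc m)"])
  then show ?case by (simp add: rho_run_empty)
qed simp

lemma card_rho_normal_forms: "finite (rho_normal_forms m) \<and> card (rho_normal_forms m) \<le> fact m"
proof (induction m)
  case (Suc m)
  have fin: "finite (rho_normal_forms m \<times> {1..Suc m})" using Suc by simp
  have "card (rho_normal_forms (Suc m)) \<le> card (rho_normal_forms m \<times> {1..Suc m})"
    using card_image_le[OF fin] by simp
  also have "\<dots> = card (rho_normal_forms m) * Suc m" by (simp add: card_cartesian_product)
  also have "\<dots> \<le> fact m * Suc m" using Suc by (intro mult_le_mono1) simp
  also have "\<dots> = fact (Suc m)" by (simp add: fact_Suc)
  finally show ?case using fin by simp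
qed simp

lemma rho_normal_forms_mult_rho:
  "m \<le> n \<Longrightarrow> x \<in> rho_normal_forms m \<Longrightarrow> 1 \<le> i \<Longrightarrow> i < m \<Longrightarrow> x \<diamond> rho n i \<in> rho_normal_forms m"
proof (induction m arbitrary: x i)
  case (Suc m)
  obtain u k where u: "u \<in> rho_normal_forms m" and k: "1 \<le> k" "k \<le> Suc m"
    and x: "x = u \<diamond> rho_run k m"
    using Suc.prems by auto
  have mem: "v \<diamond> rho_run k' m \<in> rho_normal_forms (Suc m)"
    if "v \<in> rho_normal_forms m" "1 \<le> k'" "k' \<le> Suc m" for v k'
    using that by (auto intro: rev_image_eqI[of "(v, k')"])
  have carrier: "u \<in> carrier (TVB n)" "rho_run k m \<in> carrier (TVB n)" "rho n i \<in> carrier (TVB n)"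
    using rho_normal_forms_carrier[of m] u k Suc.prems by (auto intro: rho_run_carrier)
  then have assoc: "x \<diamond> rho n i = u \<diamond> (rho_run k m \<diamond> rho n i)" by (simp add: x G.m_assoc)
  have i: "1 \<le> i" "i \<le> m" "m \<le> n - 1" using Suc.prems by auto
  show ?case
  proof (rule rho_run_mult_rho[OF k i])
    fix k' assume "1 \<le> k'" "k' \<le> Suc m" "rho_run k m \<diamond> rho n i = rho_run k' m"
    then show ?thesis using assoc mem[OF u] by simp
  next
    fix j assume j: "1 \<le> j" "j < m" "rho_run k m \<diamond> rho n i = rho n j \<diamond> rho_run k m"
    then have "x \<diamond> rho n i = (u \<diamond> rho n j) \<diamond> rho_run k m"
      using assoc carrier i by (simp add: G.m_assoc)
    moreover have "u \<diamond> rho n j \<in> rho_normal_forms m" using Suc.IH[OF _ u] j Suc.prems by simp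
    ultimately show ?thesis using mem k by simp
  qed
qed simp

lemma RhoSub_subset_rho_normal_forms: "RhoSub n \<subseteq> rho_normal_forms n"
  unfolding RhoSub_def
proof (rule G.generate_subset_of_right_closed)
  show "rho_normal_forms n \<subseteq> carrier (TVB n)" "tone \<in> rho_normal_forms n"
    by (simp_all add: rho_normal_forms_carrier one_in_rho_normal_forms)
qed (auto simp: inv_rho rho_normal_forms_mult_rho)

lemma inj_on_phiP_RhoSub: "inj_on (phiP n) (RhoSub n)"
proof -
  have fin: "finite (RhoSub n)" and card: "card (RhoSub n) \<le> fact n"
    using card_rho_normal_forms[of n] RhoSub_subset_rho_normal_forms
    by (auto intro: finite_subset dest: card_mono)
  have "card (carrier (Sym n)) = fact n"
    using card_permutations[of "{1..n}" n] by (simp add: carrier_Sym)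
  then have "card (phiP n ` RhoSub n) = card (RhoSub n)"
    using card_image_le[OF fin, of "phiP n"] card phiP_image_RhoSub by simp
  then show ?thesis using eq_card_imp_inj_on[OF fin] by blast
qed

lemma phiP_in_range: "x \<in> carrier (TVB n) \<Longrightarrow> 1 \<le> i \<Longrightarrow> i \<le> n \<Longrightarrow> 1 \<le> phiP n x i \<and> phiP n x i \<le> n"
  using permutes_in_image[OF phiP_permutes[of x], of i] by auto

lemma phiP_iso_RhoSub: "phiP n \<in> iso ((TVB n)\<lparr>carrier := RhoSub n\<rparr>) (Sym n)"
proof -
  have "phiP n \<in> hom ((TVB n)\<lparr>carrier := RhoSub n\<rparr>) (Sym n)"
    using RhoSub_carrier unfolding hom_def by auto
  then show ?thesis
    using inj_on_phiP_RhoSub phiP_image_RhoSub by (simp add: iso_def bij_betw_def)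
qed

section \<open>Conjugation of the \<open>\<gamma>\<^sub>i\<close>\<close>

lemma rho_gamma_rho:
  assumes k: "1 \<le> k" "k \<le> n - 1" and i: "1 \<le> i" "i \<le> n"
  shows "rho n k \<diamond> gamma n i \<diamond> rho n k = gamma n (transpose k (k+1) i)"
proof -
  have r: "rho n k \<diamond> gamma n k = gamma n (k+1) \<diamond> rho n k" using rho_gamma k by auto
  consider "i = k" | "i = k + 1" | "i \<noteq> k" "i \<noteq> k + 1" by blast
  then show ?thesis
  proof cases
    case 1 then show ?thesis using r k by (simp add: G.m_assoc rho_rho)
  next
    case 2
    have "rho n k \<diamond> gamma n (k+1) \<diamond> rho n k = rho n k \<diamond> (rho n k \<diamond> gamma n k)"
      using r k by (simp add: G.m_assoc)
    then show ?thesis using 2 k by (simp add: rho_rho_cancel)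
  next
    case 3
    then have "gamma n i \<diamond> rho n k = rho n k \<diamond> gamma n i" using gamma_rho_commute k i by auto
    then show ?thesis using 3 k i by (simp add: G.m_assoc rho_rho_cancel)
  qed
qed

lemma gamma_conj:
  assumes a: "a \<in> RhoSub n" and i: "1 \<le> i" "i \<le> n"
  shows "tinv a \<diamond> gamma n i \<diamond> a = gamma n (phiP n a i)"
proof -
  let ?S = "{a \<in> carrier (TVB n). \<forall>i. 1 \<le> i \<and> i \<le> n \<longrightarrow> tinv a \<diamond> gamma n i \<diamond> a = gamma n (phiP n a i)}"
  have "RhoSub n \<subseteq> ?S"
    unfolding RhoSub_def
  proof (rule G.generate_subset_of_right_closed)
    fix x r assume x: "x \<in> ?S" and "r \<in> {rho n k | k. 1 \<le> k \<and> k \<le> n - 1}"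
    then obtain k where k: "r = rho n k" "1 \<le> k" "k \<le> n - 1" by blast
    have "tinv (x \<diamond> r) \<diamond> gamma n i \<diamond> (x \<diamond> r) = gamma n (phiP n (x \<diamond> r) i)"
      if i: "1 \<le> i" "i \<le> n" for i
    proof -
      have "tinv (x \<diamond> r) \<diamond> gamma n i \<diamond> (x \<diamond> r) = rho n k \<diamond> (tinv x \<diamond> gamma n i \<diamond> x) \<diamond> rho n k"
        using x k i by (simp add: G.inv_mult_conj inv_rho)
      also have "\<dots> = gamma n (transpose k (k+1) (phiP n x i))"
        using x k i phiP_in_range[of x i] by (simp add: rho_gamma_rho)
      finally show ?thesis using x k by (simp add: phiP_rho)
    qed
    then show "x \<diamond> r \<in> ?S" using x k by simp
  qed (auto simp: inv_rho)
  then show ?thesis using a i by blast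
qed

section \<open>Conjugation of the \<open>\<lambda>\<^sub>i\<^sub>j\<close>\<close>

abbreviation rho_word :: "nat list \<Rightarrow> word" where
  "rho_word L \<equiv> map (\<lambda>k. (False, Rg k)) L"

lemma rho_word_words: "\<forall>k\<in>set L. 1 \<le> k \<and> k \<le> n - 1 \<Longrightarrow> rho_word L \<in> words n"
  by (induction L) auto

lemma phiw_rho_word_upt: "a \<le> b \<Longrightarrow> phiw (rho_word [a..<b]) a = b \<and> (\<forall>x<a. phiw (rho_word [a..<b]) x = x)"
proof (induction b rule: dec_induct)
  case (step b)
  have "phiw (rho_word [a..<Suc b]) = transpose b (Suc b) \<circ> phiw (rho_word [a..<b])"
    using step by (simp add: phiw_append phiw_def)
  then show ?case using step by (auto simp: transpose_def)
qed (simp add: phiw_def)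

lemma cls_rho_word_Cons:
  "\<forall>k\<in>set (j # L). 1 \<le> k \<and> k \<le> n - 1 \<Longrightarrow> cls n (rho_word (j # L)) = rho n j \<diamond> cls n (rho_word L)"
  using rho_word_words[of L] by (simp add: rho_def mult_TVB_cls)

lemma inv_cls_rho_word:
  "\<forall>k\<in>set L. 1 \<le> k \<and> k \<le> n - 1 \<Longrightarrow> tinv (cls n (rho_word L)) = cls n (rho_word (rev L))"
proof (induction L)
  case Nil then show ?case by (simp add: one_TVB[symmetric])
next
  case (Cons j L)
  have carrier: "rho n j \<in> carrier (TVB n)" "cls n (rho_word L) \<in> carrier (TVB n)"
    using Cons.prems rho_word_words[of L] by (simp_all add: carrier_TVB rho_def)
  have "cls n (rho_word (j # L)) = rho n j \<diamond> cls n (rho_word L)"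
    using Cons.prems by (rule cls_rho_word_Cons)
  then have "tinv (cls n (rho_word (j # L))) = tinv (cls n (rho_word L)) \<diamond> tinv (rho n j)"
    using G.inv_mult_group[OF carrier] by simp
  also have "\<dots> = cls n (rho_word (rev L)) \<diamond> rho n j" using Cons by (simp add: inv_rho)
  also have "\<dots> = cls n (rho_word (rev (j # L)))"
    using Cons.prems rho_word_words[of "rev L"] by (simp add: rho_def mult_TVB_cls)
  finally show ?case .
qed

lemma cls_rho_word_in_RhoSub: "\<forall>k\<in>set L. 1 \<le> k \<and> k \<le> n - 1 \<Longrightarrow> cls n (rho_word L) \<in> RhoSub n"
proof (induction L)
  case Nil then show ?case using subgroup.one_closed[OF subgroup_RhoSub] by (simp add: one_TVB)
next
  case (Cons j L)
  have "cls n (rho_word (j # L)) = rho n j \<diamond> cls n (rho_word L)"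
    using Cons.prems by (rule cls_rho_word_Cons)
  then show ?case using Cons subgroup.m_closed[OF subgroup_RhoSub] rho_in_RhoSub by simp
qed

lemma lambda_adjacent: "1 \<le> i \<Longrightarrow> i \<le> n - 1 \<Longrightarrow> lambda n i (i+1) = rho n i \<diamond> tinv (sigma n i)"
  by (simp add: sigma_def inv_TVB_cls inv_word_def lambda_def lamw_def rho_def mult_TVB_cls)

lemma lambda_adjacent_carrier: "1 \<le> i \<Longrightarrow> i \<le> n - 1 \<Longrightarrow> lambda n i (i+1) \<in> carrier (TVB n)"
  by (subst lambda_adjacent) auto

lemma lambda12_carrier: "lambda n 1 2 \<in> carrier (TVB n)"
  using lambda_adjacent_carrier[of 1] two_le_n by (simp add: numeral_2_eq_2)

lemma lambda_adjacent_swap: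
  "1 \<le> i \<Longrightarrow> i \<le> n - 1 \<Longrightarrow> lambda n (i+1) i = rho n i \<diamond> lambda n i (i+1) \<diamond> rho n i"
  by (simp add: lambda_def lamw_def rho_def mult_TVB_cls)

lemma lambda_far_above:
  assumes "1 \<le> i" "i + 1 < j" "j \<le> n"
  shows "lambda n i j = tinv (cls n (rho_word [i+1..<j])) \<diamond> lambda n i (i+1) \<diamond> cls n (rho_word [i+1..<j])"
proof -
  have L: "\<forall>k\<in>set [i+1..<j]. 1 \<le> k \<and> k \<le> n - 1" using assms by auto
  have "lamw i j = rho_word (rev [i+1..<j]) @ lamw i (i+1) @ rho_word [i+1..<j]"
    using assms by (simp add: lamw_def)
  then show ?thesis
    using assms L rho_word_words[OF L] rho_word_words[of "rev [i+1..<j]"]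
    by (simp add: lambda_def inv_cls_rho_word mult_TVB_cls lamw_def)
qed

lemma lambda_far_below:
  assumes "1 \<le> j" "j + 1 < i" "i \<le> n"
  shows "lambda n i j = tinv (cls n (rho_word [j+1..<i])) \<diamond> lambda n (j+1) j \<diamond> cls n (rho_word [j+1..<i])"
proof -
  have L: "\<forall>k\<in>set [j+1..<i]. 1 \<le> k \<and> k \<le> n - 1" using assms by auto
  have "lamw i j = rho_word (rev [j+1..<i]) @ lamw (j+1) j @ rho_word [j+1..<i]"
    using assms by (simp add: lamw_def)
  then show ?thesis
    using assms L rho_word_words[OF L] rho_word_words[of "rev [j+1..<i]"]
    by (simp add: lambda_def inv_cls_rho_word mult_TVB_cls lamw_def)
qed

lemma lambda_adjacent_shift:
  assumes "1 \<le> i" "i + 1 \<le> n - 1"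
  shows "tinv (rho n (i+1) \<diamond> rho n i) \<diamond> lambda n i (i+1) \<diamond> (rho n (i+1) \<diamond> rho n i)
    = lambda n (i+1) (i+2)"
proof -
  let ?r1 = "rho n i" and ?r2 = "rho n (i+1)" and ?s1 = "sigma n i" and ?s2 = "sigma n (i+1)"
  have c: "?r1 \<in> carrier (TVB n)" "?r2 \<in> carrier (TVB n)" "?s1 \<in> carrier (TVB n)" "?s2 \<in> carrier (TVB n)"
    using assms by auto
  have braid: "?r2 \<diamond> (?r1 \<diamond> (?r2 \<diamond> x)) = ?r1 \<diamond> (?r2 \<diamond> (?r1 \<diamond> x))" if "x \<in> carrier (TVB n)" for x
    using rho_braid[of i] assms c that by (simp add: G.m_assoc[symmetric])
  have "?r1 \<diamond> (?r2 \<diamond> (?s1 \<diamond> (?r2 \<diamond> ?r1))) = (?r1 \<diamond> ?r2 \<diamond> ?s1) \<diamond> (?r2 \<diamond> ?r1)"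
    using c by (simp add: G.m_assoc)
  also have "\<dots> = ?s2 \<diamond> (?r1 \<diamond> (?r2 \<diamond> (?r2 \<diamond> ?r1)))"
    using rho_rho_sigma[of i] assms c by (simp add: G.m_assoc)
  also have "\<dots> = ?s2" using c assms by (simp add: rho_rho_cancel rho_rho)
  finally have "tinv ?s2 = tinv (?r1 \<diamond> (?r2 \<diamond> (?s1 \<diamond> (?r2 \<diamond> ?r1))))" by simp
  then have inv_s2: "tinv ?s2 = ?r1 \<diamond> (?r2 \<diamond> (tinv ?s1 \<diamond> (?r2 \<diamond> ?r1)))"
    using c assms by (simp add: G.inv_mult_group inv_rho G.m_assoc)
  have "lambda n (i+1) (i+2) = ?r2 \<diamond> tinv ?s2" using lambda_adjacent[of "i+1"] assms by simp
  also have "\<dots> = ?r2 \<diamond> (?r1 \<diamond> (?r2 \<diamond> (tinv ?s1 \<diamond> (?r2 \<diamond> ?r1))))" using inv_s2 by simp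
  also have "\<dots> = ?r1 \<diamond> (?r2 \<diamond> (?r1 \<diamond> (tinv ?s1 \<diamond> (?r2 \<diamond> ?r1))))" using c braid by simp
  also have "\<dots> = tinv (?r2 \<diamond> ?r1) \<diamond> lambda n i (i+1) \<diamond> (?r2 \<diamond> ?r1)"
    using c assms lambda_adjacent[of i] by (simp add: G.m_assoc G.inv_mult_group inv_rho)
  finally show ?thesis by simp
qed

definition conj_of_lambda12 :: "nat \<Rightarrow> nat \<Rightarrow> bool" where
  "conj_of_lambda12 i j \<longleftrightarrow>
     (\<exists>a\<in>RhoSub n. phiP n a 1 = i \<and> phiP n a 2 = j \<and> lambda n i j = tinv a \<diamond> lambda n 1 2 \<diamond> a)"

lemma conj_of_lambda12_12: "conj_of_lambda12 1 2"
  unfolding conj_of_lambda12_def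
  using subgroup.one_closed[OF subgroup_RhoSub] lambda12_carrier by (intro bexI[of _ tone]) auto

lemma conj_of_lambda12_transport:
  assumes ij: "conj_of_lambda12 i j" and b: "b \<in> RhoSub n"
    and conj: "lambda n i' j' = tinv b \<diamond> lambda n i j \<diamond> b"
    and img: "phiP n b i = i'" "phiP n b j = j'"
  shows "conj_of_lambda12 i' j'"
proof -
  obtain a where a: "a \<in> RhoSub n" "phiP n a 1 = i" "phiP n a 2 = j"
    "lambda n i j = tinv a \<diamond> lambda n 1 2 \<diamond> a"
    using ij unfolding conj_of_lambda12_def by blast
  have "lambda n i' j' = tinv (a \<diamond> b) \<diamond> lambda n 1 2 \<diamond> (a \<diamond> b)"
    using conj a b RhoSub_carrier lambda12_carrier by (simp add: G.inv_mult_conj)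
  moreover have "a \<diamond> b \<in> RhoSub n" using subgroup.m_closed[OF subgroup_RhoSub] a b by blast
  moreover have "phiP n (a \<diamond> b) 1 = i'" "phiP n (a \<diamond> b) 2 = j'"
    using a b img RhoSub_carrier by simp_all
  ultimately show ?thesis unfolding conj_of_lambda12_def by blast
qed

lemma conj_of_lambda12_adjacent: "1 \<le> i \<Longrightarrow> i \<le> n - 1 \<Longrightarrow> conj_of_lambda12 i (i+1)"
proof (induction i)
  case (Suc i)
  show ?case
  proof (cases "i = 0")
    case True
    then show ?thesis using conj_of_lambda12_12 by (simp add: numeral_2_eq_2)
  next
    case False
    let ?b = "rho n (i+1) \<diamond> rho n i"
    have b: "?b \<in> RhoSub n"
      using subgroup.m_closed[OF subgroup_RhoSub] rho_in_RhoSub Suc.prems False by simp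
    have img: "phiP n ?b i = Suc i" "phiP n ?b (i+1) = Suc i + 1"
      using Suc.prems False by (simp_all add: phiP_rho transpose_def)
    have "lambda n (Suc i) (Suc i + 1) = tinv ?b \<diamond> lambda n i (i+1) \<diamond> ?b"
      using lambda_adjacent_shift[of i] Suc.prems False by simp
    then show ?thesis
      using conj_of_lambda12_transport[OF _ b _ img] Suc False by simp
  qed
qed simp

lemma conj_of_lambda12_adjacent_swap:
  assumes i: "1 \<le> i" "i \<le> n - 1"
  shows "conj_of_lambda12 (i+1) i"
proof -
  have "lambda n (i+1) i = tinv (rho n i) \<diamond> lambda n i (i+1) \<diamond> rho n i"
    using lambda_adjacent_swap[OF i] inv_rho[OF i] by simp
  moreover have "phiP n (rho n i) i = i + 1" "phiP n (rho n i) (i+1) = i"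
    using i by (simp_all add: phiP_rho)
  ultimately show ?thesis
    by (rule conj_of_lambda12_transport[OF conj_of_lambda12_adjacent[OF i] rho_in_RhoSub[OF i]])
qed

lemma conj_of_lambda12_all:
  assumes "1 \<le> i" "i \<le> n" "1 \<le> j" "j \<le> n" "i \<noteq> j"
  shows "conj_of_lambda12 i j"
proof -
  consider "j = i + 1" | "i = j + 1" | "i + 1 < j" | "j + 1 < i" using assms by linarith
  then show ?thesis
  proof cases
    case 3
    let ?b = "cls n (rho_word [i+1..<j])"
    have L: "\<forall>k\<in>set [i+1..<j]. 1 \<le> k \<and> k \<le> n - 1" using assms 3 by auto
    have "lambda n i j = tinv ?b \<diamond> lambda n i (i+1) \<diamond> ?b"
      using lambda_far_above[of i j] assms 3 by simp
    moreover have "phiP n ?b i = i" "phiP n ?b (i+1) = j"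
      using phiw_rho_word_upt[of "i+1" j] 3 rho_word_words[OF L] by (simp_all add: phiP_cls)
    moreover have "conj_of_lambda12 i (i+1)" using conj_of_lambda12_adjacent assms 3 by simp
    ultimately show ?thesis
      using conj_of_lambda12_transport cls_rho_word_in_RhoSub[OF L] by blast
  next
    case 4
    let ?b = "cls n (rho_word [j+1..<i])"
    have L: "\<forall>k\<in>set [j+1..<i]. 1 \<le> k \<and> k \<le> n - 1" using assms 4 by auto
    have "lambda n i j = tinv ?b \<diamond> lambda n (j+1) j \<diamond> ?b"
      using lambda_far_below[of j i] assms 4 by simp
    moreover have "phiP n ?b (j+1) = i" "phiP n ?b j = j"
      using phiw_rho_word_upt[of "j+1" i] 4 rho_word_words[OF L] by (simp_all add: phiP_cls)
    moreover have "conj_of_lambda12 (j+1) j" using conj_of_lambda12_adjacent_swap assms 4 by simp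
    ultimately show ?thesis
      using conj_of_lambda12_transport cls_rho_word_in_RhoSub[OF L] by blast
  qed (use assms conj_of_lambda12_adjacent conj_of_lambda12_adjacent_swap in auto)
qed

lemma RhoGen3_commute_lambda12:
  assumes x: "x \<in> RhoGen 3 n"
  shows "x \<diamond> lambda n 1 2 = lambda n 1 2 \<diamond> x"
proof -
  have l12: "lambda n 1 2 = rho n 1 \<diamond> tinv (sigma n 1)"
    using lambda_adjacent[of 1] two_le_n by (simp add: numeral_2_eq_2)
  have "rho n k \<diamond> lambda n 1 2 = lambda n 1 2 \<diamond> rho n k" if k: "3 \<le> k" "k < n" for k
  proof -
    have gens: "{rho n 1, sigma n 1} \<subseteq> carrier (TVB n)" using two_le_n by simp
    have "rho n 1 \<in> generate (TVB n) {rho n 1, sigma n 1}" "sigma n 1 \<in> generate (TVB n) {rho n 1, sigma n 1}"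
      by (simp_all add: generate.incl)
    then have "lambda n 1 2 \<in> generate (TVB n) {rho n 1, sigma n 1}"
      unfolding l12 by (blast intro: generate.eng G.generate_m_inv_closed[OF gens])
    moreover have "g \<diamond> rho n k = rho n k \<diamond> g" if "g \<in> {rho n 1, sigma n 1}" for g
      using that k rho_commute[of 1 k] sigma_rho_commute[of 1 k] by auto
    ultimately show ?thesis using G.generate_commute[OF gens, of "rho n k"] k by simp
  qed
  then show ?thesis
    using G.generate_commute[OF rho_gens_carrier lambda12_carrier _ x[unfolded RhoGen_def]] two_le_n
    by auto
qed

lemma RhoSub_stabilizer_commute_lambda12:
  assumes d: "d \<in> RhoSub n" "phiP n d 1 = 1" "phiP n d 2 = 2"
  shows "d \<diamond> lambda n 1 2 = lambda n 1 2 \<diamond> d"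
proof -
  have "phiP n d permutes {1..n}" using phiP_permutes[OF RhoSub_carrier[OF d(1)]] .
  moreover have "x \<notin> {1..n} \<or> x = 1 \<or> x = 2" if "x \<notin> {3..n}" for x :: nat
    using that by auto
  ultimately have "phiP n d permutes {3..n}"
    using d unfolding permutes_def by auto
  then obtain e where e: "e \<in> RhoGen 3 n" "phiP n e = phiP n d" using phiP_RhoGen_onto[of 3 n] by auto
  have "RhoGen 3 n \<subseteq> RhoSub n" unfolding RhoSub_eq_RhoGen RhoGen_def by (rule G.mono_generate) auto
  then have "e = d" using inj_on_phiP_RhoSub e d(1) by (auto dest: inj_onD)
  then show ?thesis using RhoGen3_commute_lambda12 e by blast
qed

lemma lambda12_conj_eq:
  assumes a: "a \<in> RhoSub n" and a': "a' \<in> RhoSub n"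
    and img: "phiP n a 1 = phiP n a' 1" "phiP n a 2 = phiP n a' 2"
  shows "tinv a \<diamond> lambda n 1 2 \<diamond> a = tinv a' \<diamond> lambda n 1 2 \<diamond> a'"
proof -
  define d where "d = a \<diamond> tinv a'"
  have carrier: "a \<in> carrier (TVB n)" "a' \<in> carrier (TVB n)" "d \<in> carrier (TVB n)"
    using a a' RhoSub_carrier by (auto simp: d_def)
  have "d \<in> RhoSub n"
    using a a' subgroup.m_closed[OF subgroup_RhoSub] subgroup.m_inv_closed[OF subgroup_RhoSub]
    unfolding d_def by blast
  moreover have "phiP n d 1 = 1" "phiP n d 2 = 2"
    using img carrier phiP_inv_apply[of a'] by (simp_all add: d_def)
  ultimately have comm: "d \<diamond> lambda n 1 2 = lambda n 1 2 \<diamond> d"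
    by (rule RhoSub_stabilizer_commute_lambda12)
  have "a = d \<diamond> a'" using carrier by (simp add: d_def G.m_assoc)
  then have "tinv a \<diamond> lambda n 1 2 \<diamond> a = tinv a' \<diamond> (tinv d \<diamond> lambda n 1 2 \<diamond> d) \<diamond> a'"
    using carrier lambda12_carrier by (simp add: G.inv_mult_conj)
  also have "tinv d \<diamond> lambda n 1 2 \<diamond> d = tinv d \<diamond> (d \<diamond> lambda n 1 2)"
    using comm carrier lambda12_carrier by (simp add: G.m_assoc)
  also have "\<dots> = lambda n 1 2"
    using carrier lambda12_carrier by (simp add: G.m_assoc[symmetric])
  finally show ?thesis .
qed

lemma lambda_conj:
  assumes b: "b \<in> RhoSub n" and ij: "1 \<le> i" "i \<le> n" "1 \<le> j" "j \<le> n" "i \<noteq> j"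
  shows "tinv b \<diamond> lambda n i j \<diamond> b = lambda n (phiP n b i) (phiP n b j)"
proof -
  have carrier: "b \<in> carrier (TVB n)" using b RhoSub_carrier by auto
  obtain a where a: "a \<in> RhoSub n" "phiP n a 1 = i" "phiP n a 2 = j"
    "lambda n i j = tinv a \<diamond> lambda n 1 2 \<diamond> a"
    using conj_of_lambda12_all[OF ij] unfolding conj_of_lambda12_def by blast
  have "1 \<le> phiP n b i" "phiP n b i \<le> n" "1 \<le> phiP n b j" "phiP n b j \<le> n"
    using phiP_in_range[OF carrier] ij by auto
  moreover have "phiP n b i \<noteq> phiP n b j"
    using permutes_inj[OF phiP_permutes[OF carrier]] ij by (auto dest: injD)
  ultimately obtain a' where a': "a' \<in> RhoSub n" "phiP n a' 1 = phiP n b i" "phiP n a' 2 = phiP n b j"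
    "lambda n (phiP n b i) (phiP n b j) = tinv a' \<diamond> lambda n 1 2 \<diamond> a'"
    using conj_of_lambda12_all unfolding conj_of_lambda12_def by blast
  have ab: "a \<diamond> b \<in> RhoSub n" using subgroup.m_closed[OF subgroup_RhoSub a(1) b] .
  have "tinv b \<diamond> lambda n i j \<diamond> b = tinv (a \<diamond> b) \<diamond> lambda n 1 2 \<diamond> (a \<diamond> b)"
    using a carrier RhoSub_carrier lambda12_carrier by (simp add: G.inv_mult_conj)
  also have "\<dots> = tinv a' \<diamond> lambda n 1 2 \<diamond> a'"
    using a a' ab carrier RhoSub_carrier by (intro lambda12_conj_eq) simp_all
  finally show ?thesis using a' by simp
qed

end

theorem mainTheorem3:
  fixes n :: nat
  assumes "n \<ge> 2"
  shows "group (TVB n)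
    \<and> phiP n \<in> hom (TVB n) (Sym n)
    \<and> subgroup (RhoSub n) (TVB n)
    \<and> phiP n \<in> iso ((TVB n)\<lparr>carrier := RhoSub n\<rparr>) (Sym n)
    \<and> (\<forall>i. 1 \<le> i \<and> i \<le> n - 1 \<longrightarrow> phiP n (rho n i) = transpose i (i + 1))
    \<and> TVP n \<lhd> TVB n
    \<and> TVP n \<inter> RhoSub n = {\<one>\<^bsub>TVB n\<^esub>}
    \<and> TVP n <#>\<^bsub>TVB n\<^esub> RhoSub n = carrier (TVB n)
    \<and> (\<forall>a \<in> RhoSub n.
         (\<forall>i j. 1 \<le> i \<and> i \<le> n \<and> 1 \<le> j \<and> j \<le> n \<and> i \<noteq> j \<longrightarrow>
            inv\<^bsub>TVB n\<^esub> a \<otimes>\<^bsub>TVB n\<^esub> lambda n i j \<otimes>\<^bsub>TVB n\<^esub> a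
              = lambda n (phiP n a i) (phiP n a j))
       \<and> (\<forall>i. 1 \<le> i \<and> i \<le> n \<longrightarrow>
            inv\<^bsub>TVB n\<^esub> a \<otimes>\<^bsub>TVB n\<^esub> gamma n i \<otimes>\<^bsub>TVB n\<^esub> a = gamma n (phiP n a i)))"
proof -
  interpret tvb n using assms by unfold_locales
  show ?thesis
    unfolding TVP_def
    using group_TVB phiP_hom subgroup_RhoSub phiP_iso_RhoSub phiP_rho H.normal_kernel
      H.kernel_Int_subgroup[OF subgroup_RhoSub inj_on_phiP_RhoSub]
      H.kernel_set_mult_subgroup[OF subgroup_RhoSub phiP_image_RhoSub]
      lambda_conj gamma_conj
    by simp
qed

end
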